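(* Let $n\ge2$ and let $G$ be an induced subgraph of $Q_n$ with exactly $2^{n-1}$ vertices such that for every direction $i\in[n]$, $G$ contains an edge in direction $i$. Then $\Delta(G)>\tfrac12\log_2 n-\tfrac12\log_2\log_2 n+\tfrac12$.
   Context: $Q_n$ is the $n$-dimensional hypercube graph on $\{0,1\}^n$; an edge $\{x,y\}$ of $Q_n$ is in direction $i$ if $x$ and $y$ differ exactly in coordinate $i$. $\Delta(G)$ is the maximum degree of $G$. *)

theory Defs
  imports Complex_Main
begin

text \<open>Vertices of Q_n: the cube {0,1}^n, encoded as 0/1-vectors indexed by {0..<n}
  (functions nat => bool that are False outside {0..<n}).\<close>
definition cube_vertices :: "nat \<Rightarrow> (nat \<Rightarrow> bool) set" where
  "cube_vertices n = {x. \<forall>i. i \<ge> n \<longrightarrow> \<not> x i}"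

definition cube_edge_dir :: "nat \<Rightarrow> (nat \<Rightarrow> bool) \<Rightarrow> (nat \<Rightarrow> bool) \<Rightarrow> nat \<Rightarrow> bool" where
  "cube_edge_dir n x y i \<longleftrightarrow> x \<in> cube_vertices n \<and> y \<in> cube_vertices n \<and> i < n \<and>
     x i \<noteq> y i \<and> (\<forall>j. j \<noteq> i \<longrightarrow> x j = y j)"

definition cube_edge :: "nat \<Rightarrow> (nat \<Rightarrow> bool) \<Rightarrow> (nat \<Rightarrow> bool) \<Rightarrow> bool" where
  "cube_edge n x y \<longleftrightarrow> (\<exists>i. cube_edge_dir n x y i)"

definition induced_degree :: "nat \<Rightarrow> (nat \<Rightarrow> bool) set \<Rightarrow> (nat \<Rightarrow> bool) \<Rightarrow> nat" where
  "induced_degree n S v = card {w \<in> S. cube_edge n v w}"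

definition induced_max_degree :: "nat \<Rightarrow> (nat \<Rightarrow> bool) set \<Rightarrow> nat" where
  "induced_max_degree n S = Max (induced_degree n S ` S)"

end

theory Submission
  imports Defs "HOL-Analysis.Convex"
begin

text \<open>For each direction \<open>i\<close>, let \<open>A\<^sub>i\<close> be the lower endpoints of the \<open>i\<close>-edges of \<open>G\<close> and
  \<open>B\<^sub>i\<close> those of the complement of \<open>G\<close>; since \<open>G\<close> has half the vertices, \<open>|A\<^sub>i| = |B\<^sub>i|\<close>.
  A vertex of \<open>A\<^sub>i\<close> and its \<open>i\<close>-neighbour both lie in \<open>G\<close>, so in all but at most \<open>2\<Delta> - 2\<close>
  other directions the neighbour lies in \<open>B\<^sub>i\<close>. The edge-isoperimetric inequality
  \<open>2 e(W) \<le> |W| log\<^sub>2 |W|\<close> applied to \<open>W = A\<^sub>i \<union> B\<^sub>i\<close> then gives \<open>|A\<^sub>i| \<ge> 2\<^bsup>n-2\<Delta>\<^esup>\<close>.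
  Summing over the \<open>n\<close> directions counts the edges of \<open>G\<close>, at most \<open>\<Delta> 2\<^bsup>n-2\<^esup>\<close>, whence
  \<open>log\<^sub>2 n \<le> log\<^sub>2 \<Delta> + 2\<Delta> - 2\<close>.\<close>

definition flip :: "nat \<Rightarrow> (nat \<Rightarrow> bool) \<Rightarrow> (nat \<Rightarrow> bool)" where
  "flip i x = x(i := \<not> x i)"

lemma flip_same [simp]: "flip i x i = (\<not> x i)"
  by (simp add: flip_def)

lemma flip_other [simp]: "j \<noteq> i \<Longrightarrow> flip i x j = x j"
  by (simp add: flip_def)

lemma flip_flip [simp]: "flip i (flip i x) = x"
  by (auto simp: flip_def)

lemma flip_commute: "flip i (flip j x) = flip j (flip i x)"
  by (auto simp: flip_def fun_eq_iff)

lemma flip_eq_iff: "flip i x = flip j x \<longleftrightarrow> i = j"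
  by (metis flip_other flip_same)

lemma inj_flip: "inj (flip i)"
  by (metis flip_flip injI)

lemma inj_flip_dir: "inj (\<lambda>i. flip i x)"
  by (auto intro: injI simp: flip_eq_iff)

definition cube_nbrs :: "(nat \<Rightarrow> bool) set \<Rightarrow> (nat \<Rightarrow> bool) \<Rightarrow> (nat \<Rightarrow> bool) set" where
  "cube_nbrs W x = {y \<in> W. \<exists>i. y = flip i x}"

definition degree_sum :: "(nat \<Rightarrow> bool) set \<Rightarrow> nat" where
  "degree_sum W = (\<Sum>x\<in>W. card (cube_nbrs W x))"

lemma card_cube_nbrs: "card (cube_nbrs W x) = card {i. flip i x \<in> W}"
proof -
  have "cube_nbrs W x = (\<lambda>i. flip i x) ` {i. flip i x \<in> W}"
    by (auto simp: cube_nbrs_def)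
  then show ?thesis
    using card_image[OF inj_on_subset[OF inj_flip_dir subset_UNIV]] by simp
qed

lemma cube_nbrs_mono: "finite W \<Longrightarrow> V \<subseteq> W \<Longrightarrow> card (cube_nbrs V x) \<le> card (cube_nbrs W x)"
  by (intro card_mono) (auto simp: cube_nbrs_def)

lemma sum_card_cube_nbrs_swap:
  assumes "finite A" "finite B"
  shows "(\<Sum>x\<in>B. card (cube_nbrs A x)) = (\<Sum>y\<in>A. card (cube_nbrs B y))"
proof -
  have count: "card (cube_nbrs V x) = (\<Sum>y\<in>V. if \<exists>k. y = flip k x then 1 else 0)"
    if "finite V" for V x
    using that by (simp add: sum.If_cases cube_nbrs_def Int_def)
  have adj_sym: "(\<exists>k. y = flip k x) = (\<exists>k. x = flip k y)" for x y
    by (metis flip_flip)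
  have "(\<Sum>x\<in>B. card (cube_nbrs A x)) = (\<Sum>x\<in>B. \<Sum>y\<in>A. if \<exists>k. y = flip k x then 1 else 0)"
    using assms count by simp
  also have "\<dots> = (\<Sum>y\<in>A. \<Sum>x\<in>B. if \<exists>k. x = flip k y then 1 else 0)"
    by (subst sum.swap) (simp only: adj_sym)
  also have "\<dots> = (\<Sum>y\<in>A. card (cube_nbrs B y))"
    using assms count by simp
  finally show ?thesis .
qed

lemma degree_sum_Un_ge:
  assumes "finite A" "finite B" "A \<inter> B = {}"
  shows "2 * (\<Sum>x\<in>A. card (cube_nbrs B x)) \<le> degree_sum (A \<union> B)"
proof -
  have fin: "finite (A \<union> B)" using assms by simp
  have "(\<Sum>x\<in>A. card (cube_nbrs B x)) \<le> (\<Sum>x\<in>A. card (cube_nbrs (A \<union> B) x))"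
    by (intro sum_mono cube_nbrs_mono[OF fin]) auto
  moreover have "(\<Sum>x\<in>A. card (cube_nbrs B x)) \<le> (\<Sum>x\<in>B. card (cube_nbrs (A \<union> B) x))"
    unfolding sum_card_cube_nbrs_swap[OF assms(1,2), symmetric]
    by (intro sum_mono cube_nbrs_mono[OF fin]) auto
  ultimately show ?thesis
    using assms by (simp add: degree_sum_def sum.union_disjoint)
qed

lemma le_log2_one_plus:
  fixes x :: real
  assumes "0 \<le> x" "x \<le> 1"
  shows "x \<le> log 2 (1 + x)"
proof -
  have "exp ((1 - x) *\<^sub>R 0 + x *\<^sub>R ln 2) \<le> (1 - x) * exp 0 + x * exp (ln 2)"
    using assms by (intro convex_onD[OF exp_convex]) auto
  then have "exp (x * ln 2) \<le> 1 + x" by simp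
  then have "ln (exp (x * ln 2)) \<le> ln (1 + x)"
    using assms by (subst ln_le_cancel_iff) auto
  then have "x * ln 2 \<le> ln (1 + x)" by simp
  then show ?thesis by (simp add: log_def field_simps)
qed

lemma xlog2_add_ge:
  fixes a b m :: nat
  assumes "m \<le> a" "m \<le> b"
  shows "real a * log 2 a + real b * log 2 b + 2 * real m \<le> real (a + b) * log 2 (real (a + b))"
proof -
  have ordered: "real a * log 2 a + real b * log 2 b + 2 * real a \<le> real (a + b) * log 2 (real (a + b))"
    if ab: "1 \<le> a" "a \<le> b" for a b :: nat
  proof -
    have "log 2 2 \<le> log 2 ((a + b) / a)"
      using ab by (subst log_le_cancel_iff) (auto simp: field_simps)
    then have A: "real a \<le> real a * (log 2 (a + b) - log 2 a)"
      using ab by (simp add: log_divide mult_left_mono)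
    have "a / b \<le> log 2 (1 + a / b)"
      using ab by (intro le_log2_one_plus) auto
    then have "b * (a / b) \<le> b * log 2 ((a + b) / b)"
      using ab by (intro mult_left_mono) (auto simp: field_simps)
    then have B: "real a \<le> real b * (log 2 (a + b) - log 2 b)"
      using ab by (simp add: log_divide)
    show ?thesis using A B by (simp add: algebra_simps)
  qed
  show ?thesis
  proof (cases "a = 0 \<or> b = 0")
    case True
    then show ?thesis using assms by auto
  next
    case nonzero: False
    show ?thesis
    proof (cases "a \<le> b")
      case True
      then show ?thesis using ordered[of a b] nonzero assms by simp
    next
      case False
      then show ?thesis using ordered[of b a] nonzero assms by (simp add: add.commute)
    qed
  qed
qed

lemma card_cube_nbrs_le_split:
  assumes "finite W"
  shows "card (cube_nbrs W x) \<le> card (cube_nbrs {y \<in> W. y k = x k} x) + card (W \<inter> {flip k x})"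
proof -
  have "cube_nbrs W x \<subseteq> cube_nbrs {y \<in> W. y k = x k} x \<union> (W \<inter> {flip k x})"
  proof
    fix y assume "y \<in> cube_nbrs W x"
    then obtain i where "y \<in> W" "y = flip i x" by (auto simp: cube_nbrs_def)
    then show "y \<in> cube_nbrs {y \<in> W. y k = x k} x \<union> (W \<inter> {flip k x})"
      by (cases "i = k") (auto simp: cube_nbrs_def)
  qed
  then have "card (cube_nbrs W x) \<le> card (cube_nbrs {y \<in> W. y k = x k} x \<union> (W \<inter> {flip k x}))"
    using assms by (intro card_mono) (auto simp: cube_nbrs_def)
  also have "\<dots> \<le> card (cube_nbrs {y \<in> W. y k = x k} x) + card (W \<inter> {flip k x})"
    by (rule card_Un_le)
  finally show ?thesis .
qed

lemma degree_sum_split: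
  fixes W :: "(nat \<Rightarrow> bool) set" and k :: nat
  assumes "finite W"
  defines "W0 \<equiv> {x \<in> W. \<not> x k}" and "W1 \<equiv> {x \<in> W. x k}"
  shows "degree_sum W \<le> degree_sum W0 + degree_sum W1 + 2 * min (card W0) (card W1)"
proof -
  define M where "M = {x \<in> W. flip k x \<in> W}"
  have fin: "finite W0" "finite W1" using assms by (auto simp: W0_def W1_def)
  have W_split: "W = W0 \<union> W1" "W0 \<inter> W1 = {}" by (auto simp: W0_def W1_def)
  have "degree_sum W \<le> (\<Sum>x\<in>W. card (cube_nbrs {y \<in> W. y k = x k} x) + card (W \<inter> {flip k x}))"
    unfolding degree_sum_def using assms by (intro sum_mono card_cube_nbrs_le_split)
  also have "\<dots> = degree_sum W0 + degree_sum W1 + card M"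
  proof -
    have "card (W \<inter> {flip k x}) = of_bool (flip k x \<in> W)" for x
      by auto
    then have "(\<Sum>x\<in>W. card (W \<inter> {flip k x})) = card M"
      using assms by (simp add: M_def Int_def)
    moreover have "{y \<in> W. y k = x k} = W0" if "x \<in> W0" for x
      using that by (auto simp: W0_def)
    moreover have "{y \<in> W. y k = x k} = W1" if "x \<in> W1" for x
      using that by (auto simp: W1_def)
    ultimately show ?thesis
      using fin W_split by (simp add: sum.distrib sum.union_disjoint degree_sum_def)
  qed
  also have "card M \<le> 2 * min (card W0) (card W1)"
  proof -
    have cross: "card (M \<inter> V) \<le> card V'" if "flip k ` (M \<inter> V) \<subseteq> V'" "finite V'" for V V'
      using card_inj_on_le[OF inj_on_subset[OF inj_flip subset_UNIV] that] .
    have "card (M \<inter> W0) \<le> card W1" "card (M \<inter> W1) \<le> card W0"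
      by (intro cross fin; auto simp: M_def W0_def W1_def)+
    moreover have "card (M \<inter> W0) \<le> card W0" "card (M \<inter> W1) \<le> card W1"
      using fin by (auto intro: card_mono)
    moreover have "card M = card (M \<inter> W0) + card (M \<inter> W1)"
      using fin W_split by (subst card_Un_disjoint[symmetric]) (auto simp: M_def intro: arg_cong[where f=card])
    ultimately show ?thesis by simp
  qed
  finally show ?thesis by simp
qed

lemma degree_sum_subset_singleton:
  assumes "W \<subseteq> {c}"
  shows "degree_sum W = 0"
proof -
  have "cube_nbrs W x = {}" if "x \<in> W" for x
  proof -
    have "flip i x \<notin> W" for i
      using assms that by (metis flip_same singletonD subsetD)
    then show ?thesis by (auto simp: cube_nbrs_def)
  qed
  then show ?thesis by (simp add: degree_sum_def)
qed

text \<open>The edge-isoperimetric inequality of the hypercube; the reference point \<open>c\<close> fixes the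
  coordinates beyond \<open>n\<close>, so that splitting along coordinate \<open>n\<close> lowers \<open>n\<close>.\<close>

lemma degree_sum_le_card_log:
  assumes "finite W" "W \<subseteq> {x. \<forall>i\<ge>n. x i = c i}"
  shows "real (degree_sum W) \<le> card W * log 2 (card W)"
  using assms
proof (induction n arbitrary: c W)
  case 0
  then have "W \<subseteq> {c}" by (auto simp: fun_eq_iff)
  then show ?case by (cases "card W = 0") (auto simp: degree_sum_subset_singleton)
next
  case (Suc n)
  define W0 W1 where "W0 = {x \<in> W. \<not> x n}" and "W1 = {x \<in> W. x n}"
  have fin: "finite W0" "finite W1" using Suc.prems by (auto simp: W0_def W1_def)
  have agree: "x i = c i" if "x \<in> W" "n < i" for x i
    using Suc.prems(2) that by (auto simp: Suc_le_eq)
  have "W0 \<subseteq> {x. \<forall>i\<ge>n. x i = (c(n := False)) i}"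
    by (intro subsetI CollectI allI impI) (auto simp: W0_def le_less agree)
  moreover have "W1 \<subseteq> {x. \<forall>i\<ge>n. x i = (c(n := True)) i}"
    by (intro subsetI CollectI allI impI) (auto simp: W1_def le_less agree)
  ultimately have IH: "real (degree_sum W0) \<le> card W0 * log 2 (card W0)"
    "real (degree_sum W1) \<le> card W1 * log 2 (card W1)"
    using Suc.IH fin by blast+
  have "card W = card W0 + card W1"
    using fin by (subst card_Un_disjoint[symmetric]) (auto simp: W0_def W1_def intro: arg_cong[where f=card])
  moreover have "real (degree_sum W) \<le> degree_sum W0 + degree_sum W1 + 2 * real (min (card W0) (card W1))"
    using degree_sum_split[OF Suc.prems(1), of n] unfolding W0_def W1_def by linarith
  ultimately show ?case
    using IH xlog2_add_ge[of "min (card W0) (card W1)" "card W0" "card W1"] by simp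
qed

lemma bij_betw_true_set: "bij_betw (\<lambda>x. {j. x j}) {x :: nat \<Rightarrow> bool. \<forall>j. j \<notin> F \<longrightarrow> \<not> x j} (Pow F)"
proof (rule bij_betwI')
  fix x y :: "nat \<Rightarrow> bool"
  show "({j. x j} = {j. y j}) = (x = y)" by (auto simp: fun_eq_iff)
next
  fix B assume "B \<in> Pow F"
  then show "\<exists>x\<in>{x. \<forall>j. j \<notin> F \<longrightarrow> \<not> x j}. B = {j. x j}"
    by (intro bexI[of _ "\<lambda>j. j \<in> B"]) auto
qed auto

lemma finite_cube_vertices: "finite (cube_vertices n)"
proof -
  have "cube_vertices n = {x. \<forall>j. j \<notin> {..<n} \<longrightarrow> \<not> x j}"
    by (auto simp: cube_vertices_def)
  then show ?thesis
    using bij_betw_finite[OF bij_betw_true_set[of "{..<n}"]] by simp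
qed

lemma card_cube_lower_half:
  assumes "i < n"
  shows "card {x \<in> cube_vertices n. \<not> x i} = 2 ^ (n - 1)"
proof -
  have "{x \<in> cube_vertices n. \<not> x i} = {x. \<forall>j. j \<notin> {..<n} - {i} \<longrightarrow> \<not> x j}"
    by (auto simp: cube_vertices_def)
  also have "card \<dots> = card (Pow ({..<n} - {i}))"
    by (rule bij_betw_same_card[OF bij_betw_true_set])
  also have "\<dots> = 2 ^ (n - 1)"
    using assms by (simp add: card_Pow)
  finally show ?thesis .
qed

lemma flip_in_cube_vertices_iff:
  "x \<in> cube_vertices n \<Longrightarrow> flip i x \<in> cube_vertices n \<longleftrightarrow> i < n"
  by (auto simp: cube_vertices_def flip_def)

lemma cube_edge_dir_iff:
  "cube_edge_dir n x y i \<longleftrightarrow> x \<in> cube_vertices n \<and> y \<in> cube_vertices n \<and> i < n \<and> y = flip i x"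
  unfolding cube_edge_dir_def by (auto simp: flip_def fun_eq_iff)

lemma induced_degree_eq_card_cube_nbrs:
  assumes "S \<subseteq> cube_vertices n" "v \<in> cube_vertices n"
  shows "induced_degree n S v = card (cube_nbrs S v)"
proof -
  have "{w \<in> S. cube_edge n v w} = cube_nbrs S v"
    using assms flip_in_cube_vertices_iff[OF assms(2)]
    by (auto simp: cube_edge_def cube_edge_dir_iff cube_nbrs_def)
  then show ?thesis by (simp add: induced_degree_def)
qed

definition dir_edges :: "(nat \<Rightarrow> bool) set \<Rightarrow> nat \<Rightarrow> (nat \<Rightarrow> bool) set" where
  "dir_edges S i = {x \<in> S. \<not> x i \<and> flip i x \<in> S}"

lemma card_dir_edges_compl:
  assumes S: "S \<subseteq> cube_vertices n" and i: "i < n"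
  shows "card (dir_edges (cube_vertices n - S) i) + card S = 2 ^ (n - 1) + card (dir_edges S i)"
proof -
  define L where "L = {x \<in> cube_vertices n. \<not> x i}"
  define P Q where "P = L \<inter> S" and "Q = {x \<in> L. flip i x \<in> S}"
  have finL: "finite L" by (simp add: L_def finite_cube_vertices)
  have PQ: "P \<subseteq> L" "Q \<subseteq> L" by (auto simp: P_def Q_def)
  then have fin: "finite P" "finite Q" using finL finite_subset by auto
  have flip_cube: "flip i x \<in> cube_vertices n" if "x \<in> cube_vertices n" for x
    using flip_in_cube_vertices_iff[OF that] i by simp
  have "S \<subseteq> P \<union> flip i ` Q"
  proof
    fix x assume x: "x \<in> S"
    show "x \<in> P \<union> flip i ` Q"
    proof (cases "x i")
      case True
      then have "flip i x \<in> Q" using x S by (auto simp: Q_def L_def flip_cube)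
      then show ?thesis by (metis UnI2 flip_flip image_eqI)
    next
      case False
      then show ?thesis using x S by (auto simp: P_def L_def)
    qed
  qed
  moreover have "P \<union> flip i ` Q \<subseteq> S"
    by (auto simp: P_def Q_def)
  moreover have "P \<inter> flip i ` Q = {}"
    by (auto simp: P_def Q_def L_def)
  ultimately have card_S: "card S = card P + card Q"
    using fin card_image[OF inj_on_subset[OF inj_flip subset_UNIV]]
    by (simp add: card_Un_disjoint subset_antisym)
  have edges: "dir_edges S i = P \<inter> Q"
    using S by (auto simp: dir_edges_def P_def Q_def L_def)
  have compl_edges: "dir_edges (cube_vertices n - S) i = L - (P \<union> Q)"
    unfolding dir_edges_def P_def Q_def L_def using flip_cube by blast
  have "P \<union> Q \<subseteq> L" using PQ by simp
  then have "card (L - (P \<union> Q)) + card (P \<union> Q) = card L"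
    using card_Diff_subset[of "P \<union> Q" L] card_mono[OF finL] fin by simp
  moreover have "card (P \<union> Q) + card (P \<inter> Q) = card P + card Q"
    using fin by (rule card_Un_Int[symmetric])
  moreover have "card L = 2 ^ (n - 1)"
    unfolding L_def by (rule card_cube_lower_half[OF i])
  ultimately show ?thesis
    unfolding edges compl_edges using card_S by linarith
qed

lemma card_cube_nbrs_dir_edges_compl:
  assumes S: "S \<subseteq> cube_vertices n" and i: "i < n"
    and deg: "\<forall>y\<in>S. card (cube_nbrs S y) \<le> d" and x: "x \<in> dir_edges S i"
  shows "n + 1 \<le> card (cube_nbrs (dir_edges (cube_vertices n - S) i) x) + 2 * d"
proof -
  define B where "B = dir_edges (cube_vertices n - S) i"
  define K where "K z = {j. flip j z \<in> S}" for z
  have xS: "x \<in> S" "flip i x \<in> S" "\<not> x i" using x by (auto simp: dir_edges_def)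
  then have xc: "x \<in> cube_vertices n" "flip i x \<in> cube_vertices n" using S by auto
  note flip_cube = flip_in_cube_vertices_iff[OF xc(1)] flip_in_cube_vertices_iff[OF xc(2)]
  have K_sub: "K z \<subseteq> {..<n}" if "z \<in> S" for z
    using S that flip_in_cube_vertices_iff[of z n] by (auto simp: K_def)
  have others: "card (K z - {i}) + 1 \<le> d" if "z \<in> S" "i \<in> K z" for z
  proof -
    have "finite (K z)" using K_sub[OF that(1)] by (rule finite_subset) simp
    moreover have "card (K z) \<le> d"
      using deg that(1) by (simp add: K_def card_cube_nbrs)
    moreover have "0 < card (K z)" using calculation(1) that(2) card_gt_0_iff by blast
    ultimately show ?thesis using that(2) by (simp add: card_Diff_singleton)
  qed
  have "{j. flip j x \<in> B} \<subseteq> {..<n}"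
    using flip_cube(1) by (auto simp: B_def dir_edges_def)
  then have fin: "finite ((K x - {i}) \<union> (K (flip i x) - {i}) \<union> {j. flip j x \<in> B})"
    using K_sub xS by (meson finite_Diff finite_Un finite_lessThan finite_subset)
  have "{..<n} - {i} \<subseteq> (K x - {i}) \<union> (K (flip i x) - {i}) \<union> {j. flip j x \<in> B}"
  proof
    fix j assume j: "j \<in> {..<n} - {i}"
    show "j \<in> (K x - {i}) \<union> (K (flip i x) - {i}) \<union> {j. flip j x \<in> B}"
    proof (cases "flip j x \<in> S \<or> flip j (flip i x) \<in> S")
      case True
      then show ?thesis using j by (auto simp: K_def)
    next
      case False
      moreover have "flip i (flip j x) = flip j (flip i x)" by (rule flip_commute)
      moreover have "flip j x \<in> cube_vertices n" "flip j (flip i x) \<in> cube_vertices n"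
        using j flip_cube by auto
      ultimately have "flip j x \<in> B"
        using j xS by (simp add: B_def dir_edges_def)
      then show ?thesis by simp
    qed
  qed
  then have "card ({..<n} - {i}) \<le> card ((K x - {i}) \<union> (K (flip i x) - {i}) \<union> {j. flip j x \<in> B})"
    by (intro card_mono fin)
  also have "\<dots> \<le> card (K x - {i}) + card (K (flip i x) - {i}) + card {j. flip j x \<in> B}"
    by (meson card_Un_le add_le_mono1 le_trans)
  finally have "n - 1 \<le> card (K x - {i}) + card (K (flip i x) - {i}) + card {j. flip j x \<in> B}"
    using i by simp
  moreover have "card (K x - {i}) + 1 \<le> d"
    using others[of x] xS by (simp add: K_def)
  moreover have "card (K (flip i x) - {i}) + 1 \<le> d"
    using others[of "flip i x"] xS by (simp add: K_def)
  moreover have "card {j. flip j x \<in> B} = card (cube_nbrs B x)"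
    by (simp only: card_cube_nbrs)
  ultimately show ?thesis
    using i unfolding B_def by linarith
qed

lemma dir_edges_lower_bound:
  assumes S: "S \<subseteq> cube_vertices n" "card S = 2 ^ (n - 1)" and i: "i < n"
    and deg: "\<forall>y\<in>S. card (cube_nbrs S y) \<le> d" and ne: "dir_edges S i \<noteq> {}"
  shows "2 powr (real n - 2 * real d) \<le> card (dir_edges S i)"
proof -
  define A B where "A = dir_edges S i" and "B = dir_edges (cube_vertices n - S) i"
  have cube: "A \<subseteq> cube_vertices n" "B \<subseteq> cube_vertices n"
    using S by (auto simp: A_def B_def dir_edges_def)
  then have fin: "finite A" "finite B"
    by (simp_all add: finite_subset[OF _ finite_cube_vertices])
  have card_AB: "card (A \<union> B) = 2 * card A"
    using fin card_dir_edges_compl[OF S(1) i] S(2)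
    by (subst card_Un_disjoint) (auto simp: A_def B_def dir_edges_def)
  have pos: "0 < card A" using ne fin by (simp add: A_def card_gt_0_iff)
  have "(\<Sum>x\<in>A. n + 1) \<le> (\<Sum>x\<in>A. card (cube_nbrs B x) + 2 * d)"
    using card_cube_nbrs_dir_edges_compl[OF S(1) i deg] by (intro sum_mono) (simp add: A_def B_def)
  then have "card A * (n + 1) \<le> (\<Sum>x\<in>A. card (cube_nbrs B x)) + card A * (2 * d)"
    by (simp add: sum.distrib)
  moreover have "2 * (\<Sum>x\<in>A. card (cube_nbrs B x)) \<le> degree_sum (A \<union> B)"
    using fin by (intro degree_sum_Un_ge) (auto simp: A_def B_def dir_edges_def)
  ultimately have "2 * (card A * (n + 1)) \<le> degree_sum (A \<union> B) + 2 * (card A * (2 * d))"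
    by linarith
  then have "real (2 * (card A * (n + 1))) \<le> real (degree_sum (A \<union> B) + 2 * (card A * (2 * d)))"
    by (rule of_nat_mono)
  moreover have "A \<union> B \<subseteq> {x. \<forall>j\<ge>n. x j = False}"
    using cube by (auto simp: cube_vertices_def)
  then have "real (degree_sum (A \<union> B)) \<le> real (2 * card A) * log 2 (real (2 * card A))"
    unfolding card_AB[symmetric] using fin by (intro degree_sum_le_card_log[where c="\<lambda>_. False"]) auto
  moreover have "log 2 (real (2 * card A)) = 1 + log 2 (card A)"
    using pos by (simp add: log_mult)
  moreover have "2 * real (card A) * (1 + log 2 (card A)) = 2 * real (card A) + 2 * (real (card A) * log 2 (card A))"
    "real (card A) * (real n - 2 * real d) = real (card A) * real n - 2 * (real (card A) * real d)"
    by (simp_all add: algebra_simps)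
  ultimately have "real (card A) * (real n - 2 * real d) \<le> real (card A) * log 2 (card A)"
    by (simp add: algebra_simps)
  then have "real n - 2 * real d \<le> log 2 (card A)"
    using pos by (simp add: mult_le_cancel_left_pos)
  then have "2 powr (real n - 2 * real d) \<le> 2 powr log 2 (card A)"
    by simp
  also have "\<dots> = card A"
    using pos by simp
  finally show ?thesis by (simp add: A_def)
qed

lemma card_flip_pairs:
  assumes "finite S"
  shows "card {x \<in> S. flip j x \<in> S} = 2 * card (dir_edges S j)"
proof -
  have upper: "flip j ` dir_edges S j = {x \<in> S. x j \<and> flip j x \<in> S}"
  proof
    show "{x \<in> S. x j \<and> flip j x \<in> S} \<subseteq> flip j ` dir_edges S j"
    proof
      fix x assume "x \<in> {x \<in> S. x j \<and> flip j x \<in> S}"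
      then have "flip j x \<in> dir_edges S j" by (auto simp: dir_edges_def)
      then show "x \<in> flip j ` dir_edges S j" by (metis flip_flip image_eqI)
    qed
  qed (auto simp: dir_edges_def)
  have "{x \<in> S. flip j x \<in> S} = dir_edges S j \<union> flip j ` dir_edges S j"
    "dir_edges S j \<inter> flip j ` dir_edges S j = {}"
    unfolding upper by (auto simp: dir_edges_def)
  moreover have "card (flip j ` dir_edges S j) = card (dir_edges S j)"
    by (rule card_image[OF inj_on_subset[OF inj_flip subset_UNIV]])
  ultimately show ?thesis
    using assms by (simp add: card_Un_disjoint dir_edges_def)
qed

lemma degree_sum_eq_sum_dir_edges:
  assumes S: "S \<subseteq> cube_vertices n"
  shows "degree_sum S = 2 * (\<Sum>j<n. card (dir_edges S j))"
proof -
  have fin: "finite S" using S finite_cube_vertices finite_subset by auto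
  have "card (cube_nbrs S x) = (\<Sum>j<n. of_bool (flip j x \<in> S))" if "x \<in> S" for x
  proof -
    have "{j. flip j x \<in> S} = {..<n} \<inter> {j. flip j x \<in> S}"
      using S that flip_in_cube_vertices_iff[of x n] by auto
    then show ?thesis by (simp add: card_cube_nbrs)
  qed
  then have "degree_sum S = (\<Sum>x\<in>S. \<Sum>j<n. of_bool (flip j x \<in> S))"
    by (simp add: degree_sum_def)
  also have "\<dots> = (\<Sum>j<n. card {x \<in> S. flip j x \<in> S})"
    using fin by (subst sum.swap) (simp add: Int_def)
  also have "\<dots> = 2 * (\<Sum>j<n. card (dir_edges S j))"
    using fin by (simp add: card_flip_pairs sum_distrib_left)
  finally show ?thesis .
qed

lemma degree_lower_bound_of_edge_count:
  fixes n d :: nat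
  assumes n: "2 \<le> n" and count: "2 * (real n * 2 powr (real n - 2 * real d)) \<le> real d * 2 ^ (n - 1)"
  shows "log 2 n / 2 - log 2 (log 2 n) / 2 + 1 / 2 < real d"
proof -
  have "0 < real n * 2 powr (real n - 2 * real d)" using n by simp
  then have d: "0 < real d"
    using count by (cases "d = 0") auto
  have "log 2 (2 * (real n * 2 powr (real n - 2 * real d))) \<le> log 2 (real d * 2 ^ (n - 1))"
    using count n d by (subst log_le_cancel_iff) auto
  then have key: "log 2 n \<le> log 2 d + 2 * real d - 2"
    using n d by (simp add: log_mult log_nat_power of_nat_diff)
  have L: "1 \<le> log 2 n" using n by simp
  show ?thesis
  proof (cases "real d \<le> log 2 n")
    case True
    then have "log 2 d \<le> log 2 (log 2 n)" using d by simp
    then show ?thesis using key by linarith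
  next
    case False
    moreover have "0 \<le> log 2 (log 2 n)" using L by simp
    ultimately show ?thesis using L by linarith
  qed
qed

theorem lemma3p5:
  fixes n :: nat and S :: "(nat \<Rightarrow> bool) set"
  assumes "n \<ge> 2"
    and "S \<subseteq> cube_vertices n"
    and "card S = 2 ^ (n - 1)"
    and "\<forall>i < n. \<exists>x\<in>S. \<exists>y\<in>S. cube_edge_dir n x y i"
  shows "real (induced_max_degree n S) >
           log 2 n / 2 - log 2 (log 2 n) / 2 + 1 / 2"
proof -
  define d where "d = induced_max_degree n S"
  have fin: "finite S" using assms(2) finite_cube_vertices finite_subset by auto
  have deg: "\<forall>x\<in>S. card (cube_nbrs S x) \<le> d"
  proof
    fix x assume x: "x \<in> S"
    then have "induced_degree n S x \<le> d"
      using fin by (auto simp: d_def induced_max_degree_def intro: Max_ge)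
    then show "card (cube_nbrs S x) \<le> d"
      using x assms(2) induced_degree_eq_card_cube_nbrs[OF assms(2)] by auto
  qed
  have "dir_edges S i \<noteq> {}" if i: "i < n" for i
  proof -
    obtain x y where "x \<in> S" "y \<in> S" "y = flip i x"
      using assms(4) i unfolding cube_edge_dir_iff by blast
    then show ?thesis
      by (cases "x i") (auto simp: dir_edges_def)
  qed
  then have "(\<Sum>j<n. 2 powr (real n - 2 * real d)) \<le> (\<Sum>j<n. real (card (dir_edges S j)))"
    by (intro sum_mono dir_edges_lower_bound[OF assms(2,3) _ deg]) auto
  moreover have "degree_sum S \<le> card S * d"
    unfolding degree_sum_def using deg sum_bounded_above[of S "\<lambda>x. card (cube_nbrs S x)" d] by simp
  then have "real (2 * (\<Sum>j<n. card (dir_edges S j))) \<le> real (card S * d)"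
    unfolding degree_sum_eq_sum_dir_edges[OF assms(2)] by (rule of_nat_mono)
  ultimately have "2 * (real n * 2 powr (real n - 2 * real d)) \<le> real d * 2 ^ (n - 1)"
    using assms(3) by (simp add: mult.commute)
  then show ?thesis
    using degree_lower_bound_of_edge_count[OF assms(1)] by (simp add: d_def)
qed

end
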